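(* Let $s\ge3$ and $k\ge1$, and let $\Gamma$ be a connected subgraph of $P_{s,k}$ with $n=|\mathcal{E}\Gamma|$ edges. Suppose there exist an edge transitive automorphism $\psi\in\mathrm{Aut}(P_{s,k})$ and an edge $e\in\mathcal{E}\Gamma$ such that $\{e,\psi(e),\dots,\psi^{n-1}(e)\}=\mathcal{E}\Gamma$ (as unoriented edges). Let $\mathfrak{s}_0,\dots,\mathfrak{s}_{s-1}$ be the sides of $P_{s,k}$, and write $n=sm+t$ with $m\in\{1,\dots,k\}$ and $t\in\{0,\dots,s-1\}$. Then (i) exactly $t$ sides satisfy $|\mathfrak{s}_i\cap\mathcal{E}\Gamma|=m+1$, and (ii) the remaining $s-t$ sides satisfy $|\mathfrak{s}_i\cap\mathcal{E}\Gamma|=m$.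
   Context: A graph is a finite 1-dimensional CW complex (multiple edges and loops allowed). A graph automorphism is a bijection of vertices together with a bijection of oriented edges (possibly reversing orientation) compatible with endpoints and edge reversal; it is edge transitive if the group it generates acts transitively on the unoriented edges. The $s$-gonal graph of depth $k$, $P_{s,k}$, has vertices $v_0,\dots,v_{s-1}$ and edges $e_i^j$ ($0\le i\le s-1$, $1\le j\le k$) with $e_i^j$ joining $v_i$ to $v_{i+1}$ (indices mod $s$). The sides of $P_{s,k}$ are the sets $\mathfrak{s}_i=\{e_i^j:1\le j\le k\}$. *)

theory Defs
  imports Main
begin

text \<open>Unoriented edges: e_i^j represented by (i,j) with i < s and 1 \<le> j \<le> k.
  Oriented edges: (i,j,b); b = True means oriented from v_i to v_{i+1 mod s},
  b = False the reverse orientation.\<close>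

type_synonym uedge = "nat \<times> nat"
type_synonym oedge = "nat \<times> nat \<times> bool"

definition P_verts :: "nat \<Rightarrow> nat set" where
  "P_verts s = {..<s}"

definition P_edges :: "nat \<Rightarrow> nat \<Rightarrow> uedge set" where
  "P_edges s k = {(i, j). i < s \<and> 1 \<le> j \<and> j \<le> k}"

definition P_oedges :: "nat \<Rightarrow> nat \<Rightarrow> oedge set" where
  "P_oedges s k = {(i, j, b). i < s \<and> 1 \<le> j \<and> j \<le> k}"

definition o_src :: "nat \<Rightarrow> oedge \<Rightarrow> nat" where
  "o_src s x = (case x of (i, j, b) \<Rightarrow> if b then i else (i + 1) mod s)"

definition o_tgt :: "nat \<Rightarrow> oedge \<Rightarrow> nat" where
  "o_tgt s x = (case x of (i, j, b) \<Rightarrow> if b then (i + 1) mod s else i)"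

definition o_rev :: "oedge \<Rightarrow> oedge" where
  "o_rev x = (case x of (i, j, b) \<Rightarrow> (i, j, \<not> b))"

definition undir :: "oedge \<Rightarrow> uedge" where
  "undir x = (case x of (i, j, b) \<Rightarrow> (i, j))"

definition u_ends :: "nat \<Rightarrow> uedge \<Rightarrow> nat set" where
  "u_ends s e = (case e of (i, j) \<Rightarrow> {i, (i + 1) mod s})"

definition P_aut :: "nat \<Rightarrow> nat \<Rightarrow> (nat \<Rightarrow> nat) \<Rightarrow> (oedge \<Rightarrow> oedge) \<Rightarrow> bool" where
  "P_aut s k fv fe \<longleftrightarrow>
     bij_betw fv (P_verts s) (P_verts s) \<and>
     bij_betw fe (P_oedges s k) (P_oedges s k) \<and>
     (\<forall>x \<in> P_oedges s k. fe (o_rev x) = o_rev (fe x)) \<and>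
     (\<forall>x \<in> P_oedges s k. o_src s (fe x) = fv (o_src s x) \<and> o_tgt s (fe x) = fv (o_tgt s x))"

definition u_act :: "(oedge \<Rightarrow> oedge) \<Rightarrow> uedge \<Rightarrow> uedge" where
  "u_act fe e = (case e of (i, j) \<Rightarrow> undir (fe (i, j, True)))"

text \<open>As the automorphism group of a finite
  graph is finite, the generated group consists of the non-negative powers.\<close>
definition edge_transitive :: "nat \<Rightarrow> nat \<Rightarrow> (oedge \<Rightarrow> oedge) \<Rightarrow> bool" where
  "edge_transitive s k fe \<longleftrightarrow>
     (\<forall>e1 \<in> P_edges s k. \<forall>e2 \<in> P_edges s k. \<exists>n::nat. (u_act fe ^^ n) e1 = e2)"

definition P_subgraph :: "nat \<Rightarrow> nat \<Rightarrow> nat set \<Rightarrow> uedge set \<Rightarrow> bool" where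
  "P_subgraph s k VG EG \<longleftrightarrow>
     VG \<subseteq> P_verts s \<and> EG \<subseteq> P_edges s k \<and> (\<forall>e \<in> EG. u_ends s e \<subseteq> VG)"

definition sub_adj :: "nat \<Rightarrow> uedge set \<Rightarrow> (nat \<times> nat) set" where
  "sub_adj s EG = {(u, v). \<exists>e \<in> EG. u_ends s e = {u, v}}"

definition sub_connected :: "nat \<Rightarrow> nat set \<Rightarrow> uedge set \<Rightarrow> bool" where
  "sub_connected s VG EG \<longleftrightarrow>
     VG \<noteq> {} \<and> (\<forall>u \<in> VG. \<forall>v \<in> VG. (u, v) \<in> (sub_adj s EG)\<^sup>*)"

definition side :: "nat \<Rightarrow> nat \<Rightarrow> uedge set" where
  "side k i = {(i, j) | j. 1 \<le> j \<and> j \<le> k}"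

end

theory Submission
  imports Defs "HOL-Combinatorics.Orbits"
begin

text \<open>Since s \<ge> 3, an edge of the s-gon determines its side through its pair of
  endpoints, so the automorphism \<psi> permutes the sides by some \<sigma>, and edge
  transitivity makes \<sigma> an s-cycle.  Hence \<psi>^j(e) lies on the side
  \<sigma>^j(side of e), which depends only on j mod s.  The n edges
  e, \<psi>(e), ..., \<psi>^(n-1)(e) are distinct, so each side contains as many
  edges of \<Gamma> as there are j < n = sm + t in the corresponding residue class mod s:
  m + 1 for t classes and m for the others.\<close>

lemma mult_add_less_mult_add_iff:
  fixes s c t q m :: nat
  assumes "c < s" "t \<le> s"
  shows "s * q + c < s * m + t \<longleftrightarrow> q < m \<or> q = m \<and> c < t"
proof (cases q m rule: linorder_cases)
  case less
  then have "s * (q + 1) \<le> s * m" by (intro mult_le_mono2) simp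
  then show ?thesis using less assms by simp
next
  case greater
  then have "s * (m + 1) \<le> s * q" by (intro mult_le_mono2) simp
  then show ?thesis using greater assms by simp
qed simp

lemma card_residue_class_below:
  fixes s m t c :: nat
  assumes "c < s" "t \<le> s"
  shows "card {j. j < s * m + t \<and> j mod s = c} = (if c < t then m + 1 else m)"
proof -
  have "{j. j < s * m + t \<and> j mod s = c} = (\<lambda>q. s * q + c) ` {q. s * q + c < s * m + t}"
  proof (intro set_eqI iffI)
    fix j assume "j \<in> {j. j < s * m + t \<and> j mod s = c}"
    then show "j \<in> (\<lambda>q. s * q + c) ` {q. s * q + c < s * m + t}"
      using div_mult_mod_eq[of j s] by (intro image_eqI[of _ _ "j div s"]) (auto simp: mult.commute)
  qed (use assms in auto)
  also have "{q. s * q + c < s * m + t} = (if c < t then {..m} else {..<m})"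
    using mult_add_less_mult_add_iff[OF assms] by auto
  finally show ?thesis
    using assms by (simp add: card_image inj_on_def)
qed

lemma funpow_transitive_orbit:
  fixes f :: "'a \<Rightarrow> 'a"
  assumes maps: "f ` A \<subseteq> A"
    and transitive: "\<And>x y. x \<in> A \<Longrightarrow> y \<in> A \<Longrightarrow> \<exists>n. (f ^^ n) x = y"
    and "a \<in> A"
  shows "bij_betw (\<lambda>n. (f ^^ n) a) {..<card A} A" and "(f ^^ n) a = (f ^^ (n mod card A)) a"
proof -
  have funpow_in: "(f ^^ n) x \<in> A" if "x \<in> A" for n x
    using that maps by (induction n) auto
  have "orbit f a = A"
  proof
    show "orbit f a \<subseteq> A"
      using funpow_in \<open>a \<in> A\<close> by (auto simp: orbit_altdef)
    show "A \<subseteq> orbit f a"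
    proof
      fix b assume "b \<in> A"
      then obtain n where "(f ^^ n) (f a) = b"
        using transitive maps \<open>a \<in> A\<close> by blast
      then have "(f ^^ Suc n) a = b" by (metis funpow_Suc_right comp_apply)
      then show "b \<in> orbit f a" unfolding orbit_altdef by blast
    qed
  qed
  with \<open>a \<in> A\<close> have self: "a \<in> orbit f a" by simp
  define p where "p = funpow_dist1 f a a"
  have "bij_betw (\<lambda>n. (f ^^ n) a) {0..<p} A"
    using inj_on_funpow_dist1[OF self] orbit_conv_funpow_dist1[OF self] \<open>orbit f a = A\<close>
    unfolding p_def bij_betw_def by simp
  moreover from this have "card A = p"
    by (auto dest: bij_betw_same_card)
  ultimately show "bij_betw (\<lambda>n. (f ^^ n) a) {..<card A} A"
    by (simp add: atLeast0LessThan)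
  show "(f ^^ n) a = (f ^^ (n mod card A)) a"
    using funpow_dist1_prop[OF self] \<open>card A = p\<close> by (simp add: p_def funpow_mod_eq)
qed

lemma card_fiber_periodic_labelling:
  fixes g :: "nat \<Rightarrow> 'a" and h :: "nat \<Rightarrow> 'b" and s :: nat
  assumes "inj_on g {..<n}" "inj_on h {..<s}" "\<And>j. f (g j) = h (j mod s)" "c < s"
  shows "card {x \<in> g ` {..<n}. f x = h c} = card {j. j < n \<and> j mod s = c}"
proof -
  have "h (j mod s) = h c \<longleftrightarrow> j mod s = c" for j
    using assms(2,4) by (intro inj_on_eq_iff) auto
  then have "{x \<in> g ` {..<n}. f x = h c} = g ` {j. j < n \<and> j mod s = c}"
    using assms(3) by auto
  moreover have "inj_on g {j. j < n \<and> j mod s = c}"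
    using assms(1) by (rule inj_on_subset) auto
  ultimately show ?thesis
    by (simp add: card_image)
qed

lemma card_level_set_bij_betw:
  fixes F :: "nat \<Rightarrow> nat"
  assumes h: "bij_betw h {..<s} {..<s}" and "t \<le> s"
    and F: "\<And>c. c < s \<Longrightarrow> F (h c) = (if c < t then m + 1 else m)"
  shows "card {i. i < s \<and> F i = m + 1} = t \<and> (\<forall>i < s. F i \<noteq> m + 1 \<longrightarrow> F i = m)"
proof -
  have preimage: "\<exists>c < s. i = h c" if "i < s" for i
    using that h by (auto simp: bij_betw_def)
  have "{i. i < s \<and> F i = m + 1} = h ` {..<t}"
    using F \<open>t \<le> s\<close> preimage h by (fastforce dest: bij_betwE split: if_splits)
  moreover have "inj_on h {..<t}"
    using h \<open>t \<le> s\<close> by (auto intro: inj_on_subset dest: bij_betw_imp_inj_on)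
  moreover have "F i = m" if "i < s" "F i \<noteq> m + 1" for i
  proof -
    obtain c where "c < s" "i = h c" using preimage \<open>i < s\<close> by blast
    then show ?thesis using F[of c] that by (simp split: if_splits)
  qed
  ultimately show ?thesis
    by (simp add: card_image)
qed

lemma polygon_edge_ends_inj:
  fixes s a b :: nat
  assumes "3 \<le> s" "a < s" "b < s" "{a, (a + 1) mod s} = {b, (b + 1) mod s}"
  shows "a = b"
  using assms by (auto simp: doubleton_eq_iff mod_Suc split: if_splits)

lemma u_ends_eq: "u_ends s x = {fst x, (fst x + 1) mod s}"
  by (cases x) (simp add: u_ends_def)

lemma P_edges_fst_less: "x \<in> P_edges s k \<Longrightarrow> fst x < s"
  by (auto simp: P_edges_def)

lemma side_Int_eq: "E \<subseteq> P_edges s k \<Longrightarrow> side k i \<inter> E = {x \<in> E. fst x = i}"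
  by (auto simp: P_edges_def side_def)

lemma P_aut_u_act:
  assumes "P_aut s k fv fe" "x \<in> P_edges s k"
  shows "u_act fe x \<in> P_edges s k" and "u_ends s (u_act fe x) = fv ` u_ends s x"
proof -
  obtain i j where x: "x = (i, j)" by fastforce
  have xo: "(i, j, True) \<in> P_oedges s k"
    using assms(2) x by (simp add: P_edges_def P_oedges_def)
  then have "fe (i, j, True) \<in> P_oedges s k"
    using assms(1) by (auto simp: P_aut_def dest: bij_betwE)
  moreover obtain i' j' b where y: "fe (i, j, True) = (i', j', b)"
    by (cases "fe (i, j, True)") auto
  ultimately show "u_act fe x \<in> P_edges s k"
    using x by (simp add: u_act_def undir_def P_edges_def P_oedges_def)
  have "o_src s (fe (i, j, True)) = fv i" "o_tgt s (fe (i, j, True)) = fv ((i + 1) mod s)"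
    using assms(1) xo by (auto simp: P_aut_def o_src_def o_tgt_def)
  then show "u_ends s (u_act fe x) = fv ` u_ends s x"
    using x y by (cases b) (auto simp: u_act_def undir_def u_ends_def o_src_def o_tgt_def)
qed

lemma P_aut_fst_u_act_cong:
  assumes "3 \<le> s" "P_aut s k fv fe" "x \<in> P_edges s k" "y \<in> P_edges s k" "fst x = fst y"
  shows "fst (u_act fe x) = fst (u_act fe y)"
proof -
  have "u_ends s x = u_ends s y"
    using assms(5) by (simp add: u_ends_eq)
  then have "u_ends s (u_act fe x) = u_ends s (u_act fe y)"
    using P_aut_u_act(2)[OF assms(2)] assms(3,4) by simp
  moreover have "fst (u_act fe x) < s" "fst (u_act fe y) < s"
    using P_aut_u_act(1)[OF assms(2)] assms(3,4) P_edges_fst_less by blast+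
  ultimately show ?thesis
    using polygon_edge_ends_inj[OF assms(1)] by (simp add: u_ends_eq)
qed

text \<open>Read off at the representative edge (i, 1) of side i; by P_aut_fst_u_act_cong
  every other edge of the side gives the same value.\<close>
definition side_action :: "(oedge \<Rightarrow> oedge) \<Rightarrow> nat \<Rightarrow> nat" where
  "side_action fe i = fst (u_act fe (i, 1))"

lemma P_aut_funpow_u_act:
  assumes "3 \<le> s" "1 \<le> k" "P_aut s k fv fe" "x \<in> P_edges s k"
  shows "(u_act fe ^^ n) x \<in> P_edges s k \<and> fst ((u_act fe ^^ n) x) = (side_action fe ^^ n) (fst x)"
proof (induction n)
  case (Suc n)
  let ?y = "(u_act fe ^^ n) x"
  have y: "?y \<in> P_edges s k" "(fst ?y, 1) \<in> P_edges s k"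
    using Suc assms(2) by (auto simp: P_edges_def)
  have "fst (u_act fe ?y) = side_action fe (fst ?y)"
    unfolding side_action_def using P_aut_fst_u_act_cong[OF assms(1,3) y] by simp
  moreover have "u_act fe ?y \<in> P_edges s k"
    using P_aut_u_act(1)[OF assms(3) y(1)] .
  ultimately show ?case
    using Suc by simp
qed (use assms in simp)

lemma side_action_orbit:
  assumes "3 \<le> s" "1 \<le> k" "P_aut s k fv fe" "edge_transitive s k fe" "a < s"
  shows "bij_betw (\<lambda>j. (side_action fe ^^ j) a) {..<s} {..<s}"
    and "(side_action fe ^^ j) a = (side_action fe ^^ (j mod s)) a"
proof -
  have "side_action fe ` {..<s} \<subseteq> {..<s}"
  proof
    fix i assume "i \<in> side_action fe ` {..<s}"
    then obtain i' where "i' < s" "i = side_action fe i'" by blast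
    then have "(i', 1) \<in> P_edges s k"
      using assms(2) by (simp add: P_edges_def)
    then show "i \<in> {..<s}"
      using P_aut_u_act(1)[OF assms(3)] P_edges_fst_less \<open>i = side_action fe i'\<close>
      unfolding side_action_def by blast
  qed
  moreover have "\<exists>n. (side_action fe ^^ n) b = c" if "b \<in> {..<s}" "c \<in> {..<s}" for b c
  proof -
    have "(b, 1) \<in> P_edges s k" "(c, 1) \<in> P_edges s k"
      using that assms(2) by (auto simp: P_edges_def)
    then obtain n where "(u_act fe ^^ n) (b, 1) = (c, 1)"
      using assms(4) unfolding edge_transitive_def by blast
    then show ?thesis
      using P_aut_funpow_u_act[OF assms(1-3) \<open>(b, 1) \<in> P_edges s k\<close>, of n] by auto
  qed
  ultimately show "bij_betw (\<lambda>j. (side_action fe ^^ j) a) {..<s} {..<s}"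
    and "(side_action fe ^^ j) a = (side_action fe ^^ (j mod s)) a"
    using funpow_transitive_orbit[of "side_action fe" "{..<s}" a] assms(5) by simp_all
qed

theorem lemma7p3:
  fixes s k m t :: nat and VG :: "nat set" and EG :: "uedge set"
    and fv :: "nat \<Rightarrow> nat" and fe :: "oedge \<Rightarrow> oedge" and e :: uedge
  assumes "s \<ge> 3" and "k \<ge> 1"
    and "P_subgraph s k VG EG" and "sub_connected s VG EG"
    and "P_aut s k fv fe" and "edge_transitive s k fe"
    and "e \<in> EG"
    and "(\<lambda>i. (u_act fe ^^ i) e) ` {..<card EG} = EG"
    and "card EG = s * m + t" and "1 \<le> m" and "m \<le> k" and "t < s"
  shows "card {i. i < s \<and> card (side k i \<inter> EG) = m + 1} = t
       \<and> (\<forall>i < s. card (side k i \<inter> EG) \<noteq> m + 1 \<longrightarrow> card (side k i \<inter> EG) = m)"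
proof -
  define h where "h j = (side_action fe ^^ j) (fst e)" for j
  define g where "g j = (u_act fe ^^ j) e" for j
  have EG: "EG \<subseteq> P_edges s k"
    using assms(3) by (simp add: P_subgraph_def)
  with assms(7) have e: "e \<in> P_edges s k" by blast
  have h_bij: "bij_betw h {..<s} {..<s}" and h_mod: "h j = h (j mod s)" for j
    using side_action_orbit[OF assms(1,2,5,6) P_edges_fst_less[OF e]] unfolding h_def by simp_all
  have fst_g: "fst (g j) = h (j mod s)" for j
    using P_aut_funpow_u_act[OF assms(1,2,5) e] h_mod unfolding g_def h_def by metis
  have g_inj: "inj_on g {..<card EG}"
    using assms(8) by (intro eq_card_imp_inj_on) (simp_all add: g_def)
  have side_count: "card (side k (h c) \<inter> EG) = (if c < t then m + 1 else m)" if "c < s" for c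
  proof -
    have "side k (h c) \<inter> EG = {x \<in> g ` {..<card EG}. fst x = h c}"
      using side_Int_eq[OF EG] assms(8) by (simp add: g_def)
    also have "card \<dots> = card {j. j < s * m + t \<and> j mod s = c}"
      using card_fiber_periodic_labelling[OF g_inj bij_betw_imp_inj_on[OF h_bij] fst_g that] assms(9)
      by simp
    also have "\<dots> = (if c < t then m + 1 else m)"
      using card_residue_class_below[OF that] assms(12) by simp
    finally show ?thesis .
  qed
  show ?thesis
    using card_level_set_bij_betw[OF h_bij _ side_count] assms(12) by simp
qed

end
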